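(* Consider the semantic collaboration (SC) methodology described in the context. Every program that satisfies the proof obligations of SC (every class invariant is admissible, and every heap update instruction executed by the program is executed in a state satisfying its precondition) satisfies, in every reachable heap, both $$\forall o:\ o.\mathit{closed}\Rightarrow o.\mathit{inv}\qquad\text{(G1)}$$ and $$\forall o,p:\ p.\mathit{closed}\wedge o\in p.\mathit{owns}\Rightarrow o.\mathit{closed}\wedge o.\mathit{owner}=p.\qquad\text{(G2)}$$
   Context: Programs are collections of classes; every object is equipped with built-in ghost attributes $\mathit{closed}$ (Boolean), $\mathit{owner}$ (object), and sets of objects $\mathit{owns}$, $\mathit{subjects}$, $\mathit{observers}$, besides its class-specific attributes. Shorthands: $o.\mathit{open}$ means $\neg o.\mathit{closed}$; $o.\mathit{free}$ means $o.\mathit{owner}.\mathit{open}$; $o.\mathit{wrapped}$ means $o.\mathit{closed}\wedge o.\mathit{free}$. A special object $\mathit{Void}$ is always allocated and open; initially it is the only allocated object. Every class has an invariant $\mathit{inv}$ (a Boolean expression over $\mathit{Current}$, the object it is evaluated on). The read set $\mathrm{reads}(e)$ of an expression $e$ is the set of objects whose attributes $e$ reads: $\mathrm{reads}(x.a)=\{x\}$, for a call to a logical (side-effect free) function it is given by that function's read clause, and for compound expressions it is the union over subexpressions; the value of $e$ depends only on the attributes of objects in $\mathrm{reads}(e)$. Each attribute $a$ has an update guard $\mathrm{guard}(s.a := y, o)$, a Boolean expression over the updated object $s$, the new value $y$, and a generic observer $o$. For a heap $h$, $e_h$ is the value of $e$ in $h$, and $h[x.a\mapsto y]$ is $h$ with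 $x.a$ changed to $y$; $\mathsf{H}$ is the current heap. An invariant $\mathit{inv}$ is admissible iff: (A1) $\mathit{inv}\Rightarrow \mathrm{reads}(\mathit{inv})\subseteq \{\mathit{Current}\}\cup\mathit{owns}\cup\mathit{subjects}$; (A2) $\mathit{inv}\Rightarrow \forall s: s\in\mathit{subjects}\Rightarrow \mathit{Current}\in s.\mathit{observers}$; (A3) $\forall s,a,y:\ s\in\mathit{subjects}\wedge\mathit{inv}\wedge \mathrm{guard}(s.a:=y,\mathit{Current})\Rightarrow \mathit{inv}_{\mathsf{H}[s.a\mapsto y]}$; (A4) $\mathit{inv}$ does not mention the attributes $\mathit{closed}$ and $\mathit{owner}$, directly or through the definitions of logical functions it uses. Heap update instructions (each modifies only the objects/attributes mentioned in its postcondition): allocation $\mathbf{create}\ x$: precondition True; postcondition $x.\mathit{open}\wedge x.\mathit{owner}=\mathit{Void}\wedge x.\mathit{observers}=\{\}$. Unwrapping $x.\mathit{unwrap}$: precondition $x.\mathit{wrapped}$; postcondition $x.\mathit{open}$. Attribute update $x.a:=y$ for $a\neq\mathit{closed}$ (and $a\ne\mathit{owner}$): preconditions $x.\mathit{open}$ and $\forall o\in x.\mathit{observers}: o.\mathit{open}\vee\mathrm{guard}(x.a:=y,o)$; postcondition $x.a=y$. Wrapping $x.\mathit{wrap}$: preconditions $x.\mathit{open}$, $x.\mathit{inv}$, and $\forall o\in x.\mathit{owns}: o.\mathit{wrapped}$; postconditions $x.\mathit{wrapped}$ and $\forall o\in x.\mathit{owns}: o.\mathit{owner}=x$ (it first sets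 the $\mathit{owner}$ attribute of every object in $x.\mathit{owns}$ and then sets $x.\mathit{closed}$). The attributes $\mathit{closed}$ and $\mathit{owner}$ are changed only by $\mathit{wrap}$ and $\mathit{unwrap}$. Objects are never deallocated. *)

theory Defs
  imports Main
begin

text \<open>The set of
allocated objects is kept separately from the heap (it is not an attribute).\<close>

record ('ob, 'f, 'v) heap =
  closed    :: "'ob \<Rightarrow> bool"
  owner     :: "'ob \<Rightarrow> 'ob"
  owns      :: "'ob \<Rightarrow> 'ob set"
  subjects  :: "'ob \<Rightarrow> 'ob set"
  observers :: "'ob \<Rightarrow> 'ob set"
  fld       :: "'ob \<Rightarrow> 'f \<Rightarrow> 'v"

definition wrapped :: "('ob, 'f, 'v) heap \<Rightarrow> 'ob \<Rightarrow> bool" where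
  "wrapped h x \<longleftrightarrow> closed h x \<and> \<not> closed h (owner h x)"

definition same_attrs :: "('ob, 'f, 'v) heap \<Rightarrow> ('ob, 'f, 'v) heap \<Rightarrow> 'ob \<Rightarrow> bool" where
  "same_attrs h h' x \<longleftrightarrow>
     closed h x = closed h' x \<and> owner h x = owner h' x \<and> owns h x = owns h' x \<and>
     subjects h x = subjects h' x \<and> observers h x = observers h' x \<and> fld h x = fld h' x"

text \<open>An attribute update "a := y" for an attribute a other than closed and owner.\<close>
datatype ('ob, 'f, 'v) upd =
    UOwns "'ob set" | USubjects "'ob set" | UObservers "'ob set" | UField 'f 'v

fun apply_upd :: "('ob, 'f, 'v) heap \<Rightarrow> 'ob \<Rightarrow> ('ob, 'f, 'v) upd \<Rightarrow> ('ob, 'f, 'v) heap" where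
  "apply_upd h s (UOwns y) = h\<lparr>owns := (owns h)(s := y)\<rparr>"
| "apply_upd h s (USubjects y) = h\<lparr>subjects := (subjects h)(s := y)\<rparr>"
| "apply_upd h s (UObservers y) = h\<lparr>observers := (observers h)(s := y)\<rparr>"
| "apply_upd h s (UField f y) = h\<lparr>fld := (fld h)(s := (fld h s)(f := y))\<rparr>"

text \<open>cinv ob h: the invariant of the class of ob, evaluated on Current = ob in heap h.
 reads ob h: the read set reads(cinv) of that invariant evaluated in h.
 guard h s u ob: the update guard guard(s.a := y, ob) of the update u (= "a := y"),
 evaluated in h.\<close>

definition reads_frame ::
  "('ob \<Rightarrow> ('ob, 'f, 'v) heap \<Rightarrow> bool) \<Rightarrow> ('ob \<Rightarrow> ('ob, 'f, 'v) heap \<Rightarrow> 'ob set) \<Rightarrow> bool" where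
  "reads_frame cinv reads \<longleftrightarrow>
     (\<forall>ob h h'. (\<forall>x\<in>reads ob h. same_attrs h h' x) \<longrightarrow> cinv ob h = cinv ob h')"

definition adm_A1 where
  "adm_A1 cinv reads \<longleftrightarrow>
     (\<forall>ob h. cinv ob h \<longrightarrow> reads ob h \<subseteq> {ob} \<union> owns h ob \<union> subjects h ob)"

definition adm_A2 where
  "adm_A2 cinv \<longleftrightarrow>
     (\<forall>ob h. cinv ob h \<longrightarrow> (\<forall>s. s \<in> subjects h ob \<longrightarrow> ob \<in> observers h s))"

definition adm_A3 where
  "adm_A3 cinv guard \<longleftrightarrow>
     (\<forall>ob h s u. s \<in> subjects h ob \<and> cinv ob h \<and> guard h s u ob \<longrightarrow> cinv ob (apply_upd h s u))"

text \<open>A4 (semantic rendering): the invariant does not depend on closed and owner.\<close>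
definition adm_A4 where
  "adm_A4 cinv \<longleftrightarrow>
     (\<forall>ob h c w. cinv ob (h\<lparr>closed := c, owner := w\<rparr>) = cinv ob h)"

definition admissible ::
  "('ob \<Rightarrow> ('ob, 'f, 'v) heap \<Rightarrow> bool) \<Rightarrow> ('ob \<Rightarrow> ('ob, 'f, 'v) heap \<Rightarrow> 'ob set)
   \<Rightarrow> (('ob, 'f, 'v) heap \<Rightarrow> 'ob \<Rightarrow> ('ob, 'f, 'v) upd \<Rightarrow> 'ob \<Rightarrow> bool) \<Rightarrow> bool" where
  "admissible cinv reads guard \<longleftrightarrow>
     adm_A1 cinv reads \<and> adm_A2 cinv \<and> adm_A3 cinv guard \<and> adm_A4 cinv"

datatype ('ob, 'f, 'v) instr =
    Create 'ob | Unwrap 'ob | Update 'ob "('ob, 'f, 'v) upd" | Wrap 'ob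

text \<open>Preconditions.  Instructions can only target allocated objects; create x
allocates a fresh object x; Void is always open, so it is never wrapped.\<close>
fun pre :: "'ob \<Rightarrow> ('ob \<Rightarrow> ('ob, 'f, 'v) heap \<Rightarrow> bool)
   \<Rightarrow> (('ob, 'f, 'v) heap \<Rightarrow> 'ob \<Rightarrow> ('ob, 'f, 'v) upd \<Rightarrow> 'ob \<Rightarrow> bool)
   \<Rightarrow> ('ob, 'f, 'v) heap \<Rightarrow> 'ob set \<Rightarrow> ('ob, 'f, 'v) instr \<Rightarrow> bool" where
  "pre void cinv guard h A (Create x) = (x \<notin> A)"
| "pre void cinv guard h A (Unwrap x) = (x \<in> A \<and> wrapped h x)"
| "pre void cinv guard h A (Update x u) =
     (x \<in> A \<and> \<not> closed h x \<and> (\<forall>ob\<in>observers h x. \<not> closed h ob \<or> guard h x u ob))"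
| "pre void cinv guard h A (Wrap x) =
     (x \<in> A \<and> x \<noteq> void \<and> \<not> closed h x \<and> cinv x h \<and> (\<forall>ob\<in>owns h x. wrapped h ob))"

text \<open>Effects (each instruction modifies only what its postcondition mentions).\<close>
fun exec :: "'ob \<Rightarrow> ('ob, 'f, 'v) heap \<Rightarrow> 'ob set \<Rightarrow> ('ob, 'f, 'v) instr
   \<Rightarrow> ('ob, 'f, 'v) heap \<times> 'ob set" where
  "exec void h A (Create x) =
     (h\<lparr>closed := (closed h)(x := False), owner := (owner h)(x := void),
        observers := (observers h)(x := {})\<rparr>, insert x A)"
| "exec void h A (Unwrap x) = (h\<lparr>closed := (closed h)(x := False)\<rparr>, A)"
| "exec void h A (Update x u) = (apply_upd h x u, A)"
| "exec void h A (Wrap x) =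
     (h\<lparr>owner := (\<lambda>ob. if ob \<in> owns h x then x else owner h ob),
        closed := (closed h)(x := True)\<rparr>, A)"

inductive reachable :: "'ob \<Rightarrow> ('ob \<Rightarrow> ('ob, 'f, 'v) heap \<Rightarrow> bool)
   \<Rightarrow> (('ob, 'f, 'v) heap \<Rightarrow> 'ob \<Rightarrow> ('ob, 'f, 'v) upd \<Rightarrow> 'ob \<Rightarrow> bool)
   \<Rightarrow> ('ob, 'f, 'v) heap \<times> 'ob set \<Rightarrow> bool"
  for void cinv guard where
  init: "\<lbrakk>\<forall>ob. \<not> closed h ob; \<forall>ob. ob \<noteq> void \<longrightarrow> observers h ob = {}\<rbrakk>
         \<Longrightarrow> reachable void cinv guard (h, {void})"
| step: "\<lbrakk>reachable void cinv guard (h, A); pre void cinv guard h A i\<rbrakk>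
         \<Longrightarrow> reachable void cinv guard (exec void h A i)"

end

theory Submission
  imports Defs
begin

text \<open>Strengthen (G1) and (G2) by the fact that unallocated objects are open and have no
observers, and show that every instruction executed under its precondition preserves the
conjunction.  Wrap and unwrap only touch closed and owner, which invariants do not read (A4);
wrap establishes the invariant of the wrapped object by its precondition.  An update or an
allocation changes an open object x.  For a closed p, x is neither p nor owned by p (owned
objects are closed by G2), and an unallocated x is not a subject of p (by A2, since x has no
observers); so if x is not a subject of p, it lies outside the read set of p's invariant (A1),
which is therefore unchanged.  If x is a subject of p, then p observes x (A2), the update
guard holds for p, and A3 preserves the invariant.\<close>

definition invariants_hold :: "('ob \<Rightarrow> ('ob, 'f, 'v) heap \<Rightarrow> bool) \<Rightarrow> ('ob, 'f, 'v) heap \<Rightarrow> bool" where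
  "invariants_hold cinv h \<longleftrightarrow> (\<forall>ob. closed h ob \<longrightarrow> cinv ob h)"

definition ownership_consistent :: "('ob, 'f, 'v) heap \<Rightarrow> bool" where
  "ownership_consistent h \<longleftrightarrow>
     (\<forall>ob p. closed h p \<and> ob \<in> owns h p \<longrightarrow> closed h ob \<and> owner h ob = p)"

definition unallocated_pristine :: "('ob, 'f, 'v) heap \<Rightarrow> 'ob set \<Rightarrow> bool" where
  "unallocated_pristine h A \<longleftrightarrow> (\<forall>ob. ob \<notin> A \<longrightarrow> \<not> closed h ob \<and> observers h ob = {})"

definition sc_invariant ::
  "('ob \<Rightarrow> ('ob, 'f, 'v) heap \<Rightarrow> bool) \<Rightarrow> ('ob, 'f, 'v) heap \<Rightarrow> 'ob set \<Rightarrow> bool" where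
  "sc_invariant cinv h A \<longleftrightarrow>
     invariants_hold cinv h \<and> ownership_consistent h \<and> unallocated_pristine h A"

lemma adm_A4_closed_update:
  "adm_A4 cinv \<Longrightarrow> cinv ob (h\<lparr>closed := c\<rparr>) = cinv ob h"
  unfolding adm_A4_def by (metis heap.update_convs(2) heap.surjective heap.update_convs(1))

lemma adm_A4_owner_closed_update:
  "adm_A4 cinv \<Longrightarrow> cinv ob (h\<lparr>owner := w, closed := c\<rparr>) = cinv ob h"
  unfolding adm_A4_def by (metis heap.update_convs(1,2) heap.surjective)

lemma same_attrs_apply_upd: "y \<noteq> x \<Longrightarrow> same_attrs h (apply_upd h x u) y"
  by (cases u) (auto simp: same_attrs_def)

lemma apply_upd_simps [simp]:
  "closed (apply_upd h x u) = closed h"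
  "owner (apply_upd h x u) = owner h"
  "y \<noteq> x \<Longrightarrow> owns (apply_upd h x u) y = owns h y"
  "y \<noteq> x \<Longrightarrow> observers (apply_upd h x u) y = observers h y"
  by (cases u; simp)+

lemma cinv_change_outside_footprint:
  assumes "reads_frame cinv reads" and "adm_A1 cinv reads" and "cinv p h"
    and "x \<notin> {p} \<union> owns h p \<union> subjects h p"
    and "\<And>y. y \<noteq> x \<Longrightarrow> same_attrs h h' y"
  shows "cinv p h'"
proof -
  have "x \<notin> reads p h" using assms(2-4) unfolding adm_A1_def by blast
  then have "\<forall>y\<in>reads p h. same_attrs h h' y" using assms(5) by metis
  with assms(1,3) show ?thesis unfolding reads_frame_def by blast
qed

lemma open_object_outside_owns:
  assumes "ownership_consistent h" and "closed h p" and "\<not> closed h x"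
  shows "x \<notin> {p} \<union> owns h p"
  using assms unfolding ownership_consistent_def by auto

lemma sc_invariant_create:
  assumes fr: "reads_frame cinv reads" and adm: "admissible cinv reads guard"
    and I: "sc_invariant cinv h A" and "x \<notin> A"
  shows "sc_invariant cinv (h\<lparr>closed := (closed h)(x := False), owner := (owner h)(x := void),
           observers := (observers h)(x := {})\<rparr>) (insert x A)"
    (is "sc_invariant cinv ?h' _")
proof -
  from I have owned: "ownership_consistent h" by (simp add: sc_invariant_def)
  from I \<open>x \<notin> A\<close> have x_open: "\<not> closed h x" and x_unobserved: "observers h x = {}"
    by (auto simp: sc_invariant_def unallocated_pristine_def)
  have "cinv p ?h'" if "closed h p" for p
  proof (rule cinv_change_outside_footprint[OF fr])
    show "adm_A1 cinv reads" using adm by (simp add: admissible_def)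
    show inv_p: "cinv p h" using I \<open>closed h p\<close> by (simp add: sc_invariant_def invariants_hold_def)
    have "x \<notin> subjects h p"
      using adm inv_p x_unobserved by (auto simp: admissible_def adm_A2_def)
    moreover have "x \<notin> {p} \<union> owns h p"
      using open_object_outside_owns[OF owned \<open>closed h p\<close> x_open] .
    ultimately show "x \<notin> {p} \<union> owns h p \<union> subjects h p" by blast
  qed (auto simp: same_attrs_def)
  then show ?thesis using I x_open
    by (auto simp: sc_invariant_def invariants_hold_def ownership_consistent_def
        unallocated_pristine_def)
qed

lemma sc_invariant_unwrap:
  assumes "adm_A4 cinv" and "sc_invariant cinv h A" and "wrapped h x"
  shows "sc_invariant cinv (h\<lparr>closed := (closed h)(x := False)\<rparr>) A"
  using assms adm_A4_closed_update[OF assms(1)]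
  by (auto simp: sc_invariant_def invariants_hold_def ownership_consistent_def
      unallocated_pristine_def wrapped_def)

lemma sc_invariant_wrap:
  assumes "adm_A4 cinv" and "sc_invariant cinv h A" and "x \<in> A" and "cinv x h"
    and "\<forall>ob\<in>owns h x. wrapped h ob"
  shows "sc_invariant cinv (h\<lparr>owner := (\<lambda>ob. if ob \<in> owns h x then x else owner h ob),
           closed := (closed h)(x := True)\<rparr>) A"
  using assms adm_A4_owner_closed_update[OF assms(1)]
  by (auto simp: sc_invariant_def invariants_hold_def ownership_consistent_def
      unallocated_pristine_def wrapped_def)

lemma sc_invariant_update:
  assumes fr: "reads_frame cinv reads" and adm: "admissible cinv reads guard"
    and I: "sc_invariant cinv h A" and "x \<in> A" and x_open: "\<not> closed h x"
    and guards: "\<forall>ob\<in>observers h x. \<not> closed h ob \<or> guard h x u ob"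
  shows "sc_invariant cinv (apply_upd h x u) A"
proof -
  from I have owned: "ownership_consistent h" by (simp add: sc_invariant_def)
  have "cinv p (apply_upd h x u)" if "closed h p" for p
  proof -
    have inv_p: "cinv p h" using I \<open>closed h p\<close> by (simp add: sc_invariant_def invariants_hold_def)
    show ?thesis
    proof (cases "x \<in> subjects h p")
      case True
      with adm inv_p have "p \<in> observers h x" by (auto simp: admissible_def adm_A2_def)
      with guards \<open>closed h p\<close> have "guard h x u p" by blast
      with adm True inv_p show ?thesis by (auto simp: admissible_def adm_A3_def)
    next
      case False
      show ?thesis
      proof (rule cinv_change_outside_footprint[OF fr _ inv_p])
        show "adm_A1 cinv reads" using adm by (simp add: admissible_def)
        have "x \<notin> {p} \<union> owns h p"
          using open_object_outside_owns[OF owned \<open>closed h p\<close> x_open] .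
        with False show "x \<notin> {p} \<union> owns h p \<union> subjects h p" by blast
      qed (rule same_attrs_apply_upd)
    qed
  qed
  then have "invariants_hold cinv (apply_upd h x u)" by (simp add: invariants_hold_def)
  moreover have "ownership_consistent (apply_upd h x u)"
    using owned x_open unfolding ownership_consistent_def by (metis apply_upd_simps(1-3))
  moreover have "unallocated_pristine (apply_upd h x u) A"
    using I \<open>x \<in> A\<close> unfolding sc_invariant_def unallocated_pristine_def
    by (metis apply_upd_simps(1,4))
  ultimately show ?thesis by (simp add: sc_invariant_def)
qed

lemma sc_invariant_exec:
  assumes fr: "reads_frame cinv reads" and adm: "admissible cinv reads guard"
    and "sc_invariant cinv h A" and "pre void cinv guard h A i"
  shows "case exec void h A i of (h', A') \<Rightarrow> sc_invariant cinv h' A'"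
proof -
  have A4: "adm_A4 cinv" using adm by (simp add: admissible_def)
  show ?thesis
  proof (cases i)
    case (Create x)
    then show ?thesis using assms(3,4) by (simp add: sc_invariant_create[OF fr adm])
  next
    case (Unwrap x)
    then show ?thesis using assms(3,4) by (simp add: sc_invariant_unwrap[OF A4])
  next
    case (Update x u)
    then show ?thesis using assms(3,4) by (simp add: sc_invariant_update[OF fr adm])
  next
    case (Wrap x)
    then show ?thesis using assms(3,4) by (simp add: sc_invariant_wrap[OF A4])
  qed
qed

lemma reachable_sc_invariant:
  assumes "reads_frame cinv reads" and "admissible cinv reads guard"
    and "reachable void cinv guard s"
  shows "case s of (h, A) \<Rightarrow> sc_invariant cinv h A"
  using assms(3)
proof (induction rule: reachable.induct)
  case (init h)
  then show ?case
    by (auto simp: sc_invariant_def invariants_hold_def ownership_consistent_def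
        unallocated_pristine_def)
next
  case (step h A i)
  then show ?case using sc_invariant_exec[OF assms(1,2)] by simp
qed

theorem proposition1:
  fixes void :: 'ob
    and cinv :: "'ob \<Rightarrow> ('ob, 'f, 'v) heap \<Rightarrow> bool"
    and reads :: "'ob \<Rightarrow> ('ob, 'f, 'v) heap \<Rightarrow> 'ob set"
    and guard :: "('ob, 'f, 'v) heap \<Rightarrow> 'ob \<Rightarrow> ('ob, 'f, 'v) upd \<Rightarrow> 'ob \<Rightarrow> bool"
  assumes "reads_frame cinv reads"
    and "admissible cinv reads guard"
    and "reachable void cinv guard (h, A)"
  shows "(\<forall>ob. closed h ob \<longrightarrow> cinv ob h) \<and>
         (\<forall>ob p. closed h p \<and> ob \<in> owns h p \<longrightarrow> closed h ob \<and> owner h ob = p)"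
proof -
  have "sc_invariant cinv h A" using reachable_sc_invariant[OF assms] by simp
  then show ?thesis by (simp add: sc_invariant_def invariants_hold_def ownership_consistent_def)
qed

end
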